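(* Let $(X,d)$ be a complete metric space and let $\{T_i\}_{i\in\mathbb{N}}$ be a sequence of continuous maps $T_i:X\to X$ having a compact invariant set $C\subseteq X$ (i.e., $T_i(C)\subseteq C$ for all $i$). Assume that $T_i$ converges uniformly on $C$ to a map $T:X\to X$ which is Lipschitz with Lipschitz constant $\mu<1$, and let $p$ be the fixed point of $T$. Then for every $x\in C$, with $\Phi_k=T_k\circ T_{k-1}\circ\cdots\circ T_1$, $$\lim_{k\to\infty} d\big(\Phi_k(x),p\big)=0.$$
   Context: Uniform convergence on $C$ means $\sup_{x\in C} d(T_i(x),T(x))\to 0$ as $i\to\infty$. *)

theory Defs
  imports "HOL-Analysis.Analysis"
begin

fun Phi :: "(nat \<Rightarrow> 'a \<Rightarrow> 'a) \<Rightarrow> nat \<Rightarrow> 'a \<Rightarrow> 'a" where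
  "Phi T 0 = id"
| "Phi T (Suc k) = T (Suc k) \<circ> Phi T k"

end

theory Submission
  imports Defs
begin

text \<open>Along an orbit, \<open>a k = d(\<Phi>\<^sub>k x, p)\<close> satisfies
  \<open>a (k+1) \<le> \<mu> a k + sup\<^sub>C d(T\<^sub>k\<^sub>+\<^sub>1, T)\<close>, because the orbit stays in \<open>C\<close> and \<open>p\<close> is fixed by
  the contraction \<open>T\<close>. Since the perturbation tends to zero and \<open>a\<close> is bounded by compactness
  of \<open>C\<close>, iterating the inequality from a late enough index forces \<open>a k \<rightarrow> 0\<close>.\<close>

lemma affine_recurrence_bound:
  fixes a :: "nat \<Rightarrow> real"
  assumes "0 \<le> \<mu>" "\<mu> < 1" "0 \<le> \<delta>" and rec: "\<And>n. a (Suc n) \<le> \<mu> * a n + \<delta>"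
  shows "a n \<le> \<mu> ^ n * a 0 + \<delta> / (1 - \<mu>)"
proof (induction n)
  case 0
  then show ?case using assms by simp
next
  case (Suc n)
  have "a (Suc n) \<le> \<mu> * (\<mu> ^ n * a 0 + \<delta> / (1 - \<mu>)) + \<delta>"
    using rec[of n] mult_left_mono[OF Suc.IH \<open>0 \<le> \<mu>\<close>] by linarith
  also have "\<dots> = \<mu> ^ Suc n * a 0 + \<delta> / (1 - \<mu>)"
    using \<open>\<mu> < 1\<close> by (simp add: field_simps)
  finally show ?case .
qed

lemma perturbed_contraction_tendsto_zero:
  fixes a :: "nat \<Rightarrow> real"
  assumes "0 \<le> \<mu>" "\<mu> < 1"
    and nonneg: "\<And>n. 0 \<le> a n" and bound: "\<And>n. a n \<le> B"
    and step: "\<And>\<delta>. 0 < \<delta> \<Longrightarrow> \<forall>\<^sub>F n in sequentially. a (Suc n) \<le> \<mu> * a n + \<delta>"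
  shows "a \<longlonglongrightarrow> 0"
proof (rule LIMSEQ_I)
  fix r :: real
  assume "0 < r"
  define \<delta> where "\<delta> = r * (1 - \<mu>) / 2"
  have "0 < \<delta>" using \<open>0 < r\<close> \<open>\<mu> < 1\<close> by (simp add: \<delta>_def)
  then obtain N where N: "\<And>n. n \<ge> N \<Longrightarrow> a (Suc n) \<le> \<mu> * a n + \<delta>"
    using step by (auto simp: eventually_sequentially)
  have tail: "a (N + m) \<le> \<mu> ^ m * B + r / 2" for m
  proof -
    have "a (N + m) \<le> \<mu> ^ m * a (N + 0) + \<delta> / (1 - \<mu>)"
      by (rule affine_recurrence_bound[where a = "\<lambda>m. a (N + m)"])
        (use assms \<open>0 < \<delta>\<close> N in auto)
    moreover have "\<mu> ^ m * a N \<le> \<mu> ^ m * B"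
      using bound \<open>0 \<le> \<mu>\<close> by (simp add: mult_left_mono)
    moreover have "\<delta> / (1 - \<mu>) = r / 2"
      using \<open>\<mu> < 1\<close> by (simp add: \<delta>_def field_simps)
    ultimately show ?thesis by simp
  qed
  have "(\<lambda>m. \<mu> ^ m * B) \<longlonglongrightarrow> 0"
    using assms(1,2) by (intro tendsto_mult_left_zero LIMSEQ_power_zero) auto
  then obtain M where M: "\<And>m. m \<ge> M \<Longrightarrow> norm (\<mu> ^ m * B - 0) < r / 2"
    using \<open>0 < r\<close> by (meson LIMSEQ_D half_gt_zero)
  show "\<exists>n0. \<forall>n\<ge>n0. norm (a n - 0) < r"
  proof (intro exI allI impI)
    fix n
    assume "n \<ge> N + M"
    then have "a n \<le> \<mu> ^ (n - N) * B + r / 2"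
      using tail[of "n - N"] by simp
    moreover have "\<mu> ^ (n - N) * B < r / 2"
      using M[of "n - N"] \<open>n \<ge> N + M\<close> abs_ge_self[of "\<mu> ^ (n - N) * B"] by fastforce
    ultimately
    show "norm (a n - 0) < r" using nonneg[of n] by simp
  qed
qed

lemma Phi_in_invariant:
  assumes "\<And>i. i \<ge> 1 \<Longrightarrow> Ts i ` C \<subseteq> C" and "x \<in> C"
  shows "Phi Ts k x \<in> C"
  by (induction k) (use assms in auto)

lemma dist_perturbed_contraction_fixpoint:
  assumes "\<mu>-lipschitz_on UNIV T" and "T p = p"
  shows "dist (S y) p \<le> \<mu> * dist y p + dist (S y) (T y)"
proof -
  have "dist (S y) p \<le> dist (S y) (T y) + dist (T y) (T p)"
    using dist_triangle \<open>T p = p\<close> by metis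
  moreover have "dist (T y) (T p) \<le> \<mu> * dist y p"
    using lipschitz_onD[OF assms(1)] by blast
  ultimately show ?thesis by linarith
qed

theorem mainTheorem3:
  fixes Ts :: "nat \<Rightarrow> 'a::{metric_space,complete_space} \<Rightarrow> 'a"
    and T :: "'a \<Rightarrow> 'a" and C :: "'a set" and \<mu> :: real and p :: 'a
  assumes cont: "\<And>i. i \<ge> 1 \<Longrightarrow> continuous_on UNIV (Ts i)"
    and cpt: "compact C"
    and inv: "\<And>i. i \<ge> 1 \<Longrightarrow> Ts i ` C \<subseteq> C"
    and unif: "uniform_limit C Ts T sequentially"
    and lip: "\<mu>-lipschitz_on UNIV T"
    and mu: "\<mu> < 1"
    and fixp: "T p = p"
  shows "\<forall>x\<in>C. (\<lambda>k. dist (Phi Ts k x) p) \<longlonglongrightarrow> 0"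
proof
  fix x
  assume "x \<in> C"
  then have orbit: "Phi Ts k x \<in> C" for k
    using Phi_in_invariant[of Ts C, OF inv] by blast
  obtain B where B: "\<forall>y\<in>C. dist p y \<le> B"
    using compact_imp_bounded[OF cpt] bounded_any_center by blast
  have step: "\<forall>\<^sub>F k in sequentially.
      dist (Phi Ts (Suc k) x) p \<le> \<mu> * dist (Phi Ts k x) p + \<delta>" if "0 < \<delta>" for \<delta>
  proof -
    have "\<forall>\<^sub>F k in sequentially. \<forall>y\<in>C. dist (Ts (Suc k) y) (T y) < \<delta>"
      using unif \<open>0 < \<delta>\<close> unfolding uniform_limit_iff
      by (intro eventually_sequentially_Suc[THEN iffD2]) blast
    then show ?thesis
    proof eventually_elim
      case (elim k)
      then have "dist (Ts (Suc k) (Phi Ts k x)) (T (Phi Ts k x)) < \<delta>"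
        using orbit by blast
      then show ?case
        using dist_perturbed_contraction_fixpoint[OF lip fixp, of "Ts (Suc k)" "Phi Ts k x"] by simp
    qed
  qed
  show "(\<lambda>k. dist (Phi Ts k x) p) \<longlonglongrightarrow> 0"
    using lipschitz_on_nonneg[OF lip] mu step orbit B
    by (intro perturbed_contraction_tendsto_zero[where B = B]) (auto simp: dist_commute)
qed

end
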